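(* Let $\Lambda=(\alpha_1,\alpha_2,\beta_2,\beta_3,\beta_4)$ be five distinct real numbers with $\alpha_2+\beta_2\neq\beta_3+\beta_4$. Extend to sequences by $\alpha_i:=\alpha_1$ for odd $i$, $\alpha_i:=\alpha_2$ for even $i$, and $\beta_i:=\beta_j$ whenever $j\in\{2,3,4\}$ and $i\equiv j\pmod 3$. Let $n\ge1$, let $a_1,\dots,a_n\in\mathbb R$ and $b_2,\dots,b_n>0$, and let $C_1,\dots,C_n$ be defined by $C_1=(a_1)$ and $C_{k+1}=\begin{pmatrix}a_{k+1}& b_{k+1}{\bf e}_1^\top\\ {\bf e}_1 & C_k\end{pmatrix}$. The following are equivalent: (i) $\sigma(C_1)=\{\alpha_1\}$ and $\sigma(C_i)\cap\{\alpha_1,\alpha_2,\beta_2,\beta_3,\beta_4\}=\{\alpha_i,\beta_i\}$ for $i=2,\dots,n$; (ii) for $1\le i\le n$, $a_i=\alpha_1$ if $i$ is odd, $a_2=-\alpha_1+\alpha_2+\beta_2$, and $a_i=\alpha_2$ if $i>2$ is even; and for $2\le i\le n$, $b_2=(\beta_2-\alpha_1)(\alpha_1-\alpha_2)$, $b_3=(\beta_3-\alpha_2)(\beta_3-\beta_2)$, $b_4=\dfrac{(\beta_4-\alpha_1)(\beta_3-\beta_4)(\alpha_2+\beta_2-\beta_3-\beta_4)}{\beta_4-\beta_2}$, and $b_i=(\beta_j-\alpha_1)(\beta_j-\alpha_2)$ when $i>4$, $j\in\{2,3,4\}$, $i\equiv j\pmod 3$. Moreover, when these conditions hold: if $n\ge4$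 then $\Lambda\in\mathcal B$; if $n=3$ then $(\alpha_1,\alpha_2,\beta_2,\beta_3)\in\mathcal B_3$; if $n=2$ then $(\alpha_1,\alpha_2,\beta_2)\in\mathcal B_2$.
   Context: ${\bf e}_1$ denotes the first standard basis vector of the appropriate length. $\mathcal B$ is the set of all $(\alpha_1,\alpha_2,\beta_2,\beta_3,\beta_4)\in\mathbb R^5$ with five distinct entries satisfying one of the following twelve conditions: $\beta_2<\alpha_1<\alpha_2<\beta_3<\beta_4$; $\beta_2<\beta_4<\alpha_1<\alpha_2<\beta_3$; $\beta_4<\beta_2<\alpha_1<\alpha_2<\beta_3$ and $\alpha_2+\beta_2>\beta_4+\beta_3$; $\beta_3<\beta_2<\alpha_1<\alpha_2<\beta_4$ and $\alpha_2+\beta_2<\beta_4+\beta_3$; $\beta_3<\beta_2<\beta_4<\alpha_1<\alpha_2$; $\beta_4<\beta_3<\beta_2<\alpha_1<\alpha_2$; $\beta_4<\beta_3<\alpha_2<\alpha_1<\beta_2$; $\beta_3<\alpha_2<\alpha_1<\beta_4<\beta_2$; $\beta_3<\alpha_2<\alpha_1<\beta_2<\beta_4$ and $\alpha_2+\beta_2<\beta_4+\beta_3$; $\beta_4<\alpha_2<\alpha_1<\beta_2<\beta_3$ and $\alpha_2+\beta_2>\beta_4+\beta_3$; $\alpha_2<\alpha_1<\beta_4<\beta_2<\beta_3$; $\alpha_2<\alpha_1<\beta_2<\beta_3<\beta_4$. $\mathcal B_3$ is the set of $(\alpha_1,\alpha_2,\beta_2,\beta_3)$ such that $(\alpha_1,\alpha_2,\beta_2,\beta_3,\beta_4)\in\mathcal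 B$ for some $\beta_4$; $\mathcal B_2$ is the set of $(\alpha_1,\alpha_2,\beta_2)$ such that $(\alpha_1,\alpha_2,\beta_2,\beta_3,\beta_4)\in\mathcal B$ for some $\beta_3,\beta_4$. *)

theory Defs
  imports "Jordan_Normal_Form.Spectral_Radius"
begin

text \<open>The matrices C_k (k x k), built recursively:
  C_1 = (a_1),  C_(k+1) = [[a_(k+1), b_(k+1) e_1^T], [e_1, C_k]].
  Sequences a, b are indexed from 1 (index 0 unused).\<close>
fun Cmat :: "(nat \<Rightarrow> real) \<Rightarrow> (nat \<Rightarrow> real) \<Rightarrow> nat \<Rightarrow> real mat" where
  "Cmat a b 0 = 0\<^sub>m 0 0"
| "Cmat a b (Suc 0) = mat 1 1 (\<lambda>_. a 1)"
| "Cmat a b (Suc (Suc k)) =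
     four_block_mat
       (mat 1 1 (\<lambda>_. a (k + 2)))
       (mat 1 (k + 1) (\<lambda>(i, j). if j = 0 then b (k + 2) else 0))
       (mat (k + 1) 1 (\<lambda>(i, j). if i = 0 then 1 else 0))
       (Cmat a b (Suc k))"

definition alpha_seq :: "real \<Rightarrow> real \<Rightarrow> nat \<Rightarrow> real" where
  "alpha_seq \<alpha>1 \<alpha>2 i = (if odd i then \<alpha>1 else \<alpha>2)"

definition beta_seq :: "real \<Rightarrow> real \<Rightarrow> real \<Rightarrow> nat \<Rightarrow> real" where
  "beta_seq \<beta>2 \<beta>3 \<beta>4 i =
     (if i mod 3 = 2 then \<beta>2 else if i mod 3 = 0 then \<beta>3 else \<beta>4)"

definition setB :: "(real \<times> real \<times> real \<times> real \<times> real) set" where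
  "setB = {(\<alpha>1, \<alpha>2, \<beta>2, \<beta>3, \<beta>4).
     distinct [\<alpha>1, \<alpha>2, \<beta>2, \<beta>3, \<beta>4] \<and>
     ((\<beta>2 < \<alpha>1 \<and> \<alpha>1 < \<alpha>2 \<and> \<alpha>2 < \<beta>3 \<and> \<beta>3 < \<beta>4)
    \<or> (\<beta>2 < \<beta>4 \<and> \<beta>4 < \<alpha>1 \<and> \<alpha>1 < \<alpha>2 \<and> \<alpha>2 < \<beta>3)
    \<or> (\<beta>4 < \<beta>2 \<and> \<beta>2 < \<alpha>1 \<and> \<alpha>1 < \<alpha>2 \<and> \<alpha>2 < \<beta>3 \<and> \<alpha>2 + \<beta>2 > \<beta>4 + \<beta>3)
    \<or> (\<beta>3 < \<beta>2 \<and> \<beta>2 < \<alpha>1 \<and> \<alpha>1 < \<alpha>2 \<and> \<alpha>2 < \<beta>4 \<and> \<alpha>2 + \<beta>2 < \<beta>4 + \<beta>3)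
    \<or> (\<beta>3 < \<beta>2 \<and> \<beta>2 < \<beta>4 \<and> \<beta>4 < \<alpha>1 \<and> \<alpha>1 < \<alpha>2)
    \<or> (\<beta>4 < \<beta>3 \<and> \<beta>3 < \<beta>2 \<and> \<beta>2 < \<alpha>1 \<and> \<alpha>1 < \<alpha>2)
    \<or> (\<beta>4 < \<beta>3 \<and> \<beta>3 < \<alpha>2 \<and> \<alpha>2 < \<alpha>1 \<and> \<alpha>1 < \<beta>2)
    \<or> (\<beta>3 < \<alpha>2 \<and> \<alpha>2 < \<alpha>1 \<and> \<alpha>1 < \<beta>4 \<and> \<beta>4 < \<beta>2)
    \<or> (\<beta>3 < \<alpha>2 \<and> \<alpha>2 < \<alpha>1 \<and> \<alpha>1 < \<beta>2 \<and> \<beta>2 < \<beta>4 \<and> \<alpha>2 + \<beta>2 < \<beta>4 + \<beta>3)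
    \<or> (\<beta>4 < \<alpha>2 \<and> \<alpha>2 < \<alpha>1 \<and> \<alpha>1 < \<beta>2 \<and> \<beta>2 < \<beta>3 \<and> \<alpha>2 + \<beta>2 > \<beta>4 + \<beta>3)
    \<or> (\<alpha>2 < \<alpha>1 \<and> \<alpha>1 < \<beta>4 \<and> \<beta>4 < \<beta>2 \<and> \<beta>2 < \<beta>3)
    \<or> (\<alpha>2 < \<alpha>1 \<and> \<alpha>1 < \<beta>2 \<and> \<beta>2 < \<beta>3 \<and> \<beta>3 < \<beta>4))}"

definition setB3 :: "(real \<times> real \<times> real \<times> real) set" where
  "setB3 = {(\<alpha>1, \<alpha>2, \<beta>2, \<beta>3). \<exists>\<beta>4. (\<alpha>1, \<alpha>2, \<beta>2, \<beta>3, \<beta>4) \<in> setB}"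

definition setB2 :: "(real \<times> real \<times> real) set" where
  "setB2 = {(\<alpha>1, \<alpha>2, \<beta>2). \<exists>\<beta>3 \<beta>4. (\<alpha>1, \<alpha>2, \<beta>2, \<beta>3, \<beta>4) \<in> setB}"

end

theory Submission
  imports Defs
begin

(*
  The characteristic polynomials p_k of the matrices C_k obey the three-term recurrence
  p_(k+2) = (x - a_(k+2)) p_(k+1) - b_(k+2) p_k, so consecutive ones have no common zero when
  the b_i do not vanish. Hence if p_k(x) = 0, then p_(k+2)(x) = 0 exactly when a_(k+2) = x, and
  p_(k+3)(x) = 0 exactly when b_(k+3) = (x - a_(k+3)) (x - a_(k+2)). As alpha_i has period 2 and
  beta_i has period 3, asking alpha_i and beta_i to be zeros of p_i fixes a_i and b_i one index
  at a time (indices 1 to 4 by direct computation), and the same no-common-zero argument shows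
  that the other three points of Lambda are not zeros of p_i. Finally, positivity of b_2, b_3
  and b_4 is a sign condition that singles out the orderings listed in B.
*)

text \<open>\<open>Cmat_poly a b k x\<close> is \<open>det (x I - C_k)\<close>, expanded along the first row.\<close>
fun Cmat_poly :: "(nat \<Rightarrow> real) \<Rightarrow> (nat \<Rightarrow> real) \<Rightarrow> nat \<Rightarrow> real \<Rightarrow> real" where
  "Cmat_poly a b 0 x = 1"
| "Cmat_poly a b (Suc 0) x = x - a 1"
| "Cmat_poly a b (Suc (Suc k)) x =
     (x - a (k + 2)) * Cmat_poly a b (Suc k) x - b (k + 2) * Cmat_poly a b k x"

lemma Cmat_poly_Suc:
  "Cmat_poly a b (Suc m) x =
     (x - a (Suc m)) * Cmat_poly a b m x - (if m = 0 then 0 else b (Suc m) * Cmat_poly a b (m - 1) x)"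
  by (cases m) auto

lemma dim_row_Cmat [simp]: "dim_row (Cmat a b k) = k"
  by (induction a b k rule: Cmat.induct) auto

lemma dim_col_Cmat [simp]: "dim_col (Cmat a b k) = k"
  by (induction a b k rule: Cmat.induct) auto

lemma index_Cmat:
  "i < k \<Longrightarrow> j < k \<Longrightarrow> Cmat a b k $$ (i, j) =
     (if i = j then a (k - i) else if j = Suc i then b (k - i) else if i = Suc j then 1 else 0)"
proof (induction a b k arbitrary: i j rule: Cmat.induct)
  case (1 a b)
  then show ?case by simp
next
  case (2 a b)
  then show ?case by simp
next
  case (3 a b k)
  have "Cmat a b (Suc (Suc k)) $$ (i, j) =
     (if i = 0 then (if j = 0 then a (k + 2) else if j = 1 then b (k + 2) else 0)
      else if j = 0 then (if i = 1 then 1 else 0) else Cmat a b (Suc k) $$ (i - 1, j - 1))"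
    using "3.prems" by (simp add: index_mat_four_block)
  then show ?case
    using "3.IH"[of "i - 1" "j - 1"] "3.prems" by (cases i; cases j) (simp_all add: Suc_diff_Suc)
qed

lemma sum_tridiagonal_row:
  fixes w :: "nat \<Rightarrow> real"
  assumes "i < k"
  shows "(\<Sum>j<k. (if i = j then c else if j = Suc i then d else if i = Suc j then 1 else 0) * w j)
     = c * w i + (if Suc i < k then d * w (Suc i) else 0) + (if 0 < i then w (i - 1) else 0)"
proof -
  have "(\<Sum>j<k. (if i = j then c else if j = Suc i then d else if i = Suc j then 1 else 0) * w j)
    = (\<Sum>j<k. (if j = i then c * w i else 0) + (if j = Suc i then d * w (Suc i) else 0)
        + (if j = i - 1 then (if 0 < i then w (i - 1) else 0) else 0))"
    by (rule sum.cong) auto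
  also have "\<dots> = c * w i + (if Suc i < k then d * w (Suc i) else 0) + (if 0 < i then w (i - 1) else 0)"
    using assms by (simp add: sum.distrib)
  finally show ?thesis .
qed

lemma index_Cmat_mult_vec:
  assumes "i < k" "v \<in> carrier_vec k"
  shows "(Cmat a b k *\<^sub>v v) $ i = a (k - i) * v $ i
     + (if Suc i < k then b (k - i) * v $ Suc i else 0) + (if 0 < i then v $ (i - 1) else 0)"
proof -
  have "(Cmat a b k *\<^sub>v v) $ i = (\<Sum>j<k. Cmat a b k $$ (i, j) * v $ j)"
    using assms by (simp add: scalar_prod_def atLeast0LessThan)
  also have "\<dots> = (\<Sum>j<k. (if i = j then a (k - i) else if j = Suc i then b (k - i)
                       else if i = Suc j then 1 else 0) * v $ j)"
    using assms by (intro sum.cong) (auto simp: index_Cmat)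
  finally show ?thesis
    using sum_tridiagonal_row[OF assms(1)] by simp
qed

lemma Cmat_mult_vec_poly:
  fixes a b :: "nat \<Rightarrow> real" and x :: real
  assumes "1 \<le> k"
  defines "w \<equiv> vec k (\<lambda>i. Cmat_poly a b (k - 1 - i) x)"
  shows "Cmat a b k *\<^sub>v w = x \<cdot>\<^sub>v w - Cmat_poly a b k x \<cdot>\<^sub>v unit_vec k 0"
proof (rule eq_vecI)
  have w_carrier: "w \<in> carrier_vec k" by (simp add: w_def)
  fix i assume "i < dim_vec (x \<cdot>\<^sub>v w - Cmat_poly a b k x \<cdot>\<^sub>v unit_vec k 0)"
  then have i: "i < k" by (simp add: w_def)
  define m where "m = k - 1 - i"
  have m: "k - i = Suc m" "Suc i < k \<longleftrightarrow> m \<noteq> 0" "i = 0 \<Longrightarrow> Suc m = k"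
    using i by (auto simp: m_def)
  have w: "w $ i = Cmat_poly a b m x" "m \<noteq> 0 \<Longrightarrow> w $ Suc i = Cmat_poly a b (m - 1) x"
    "0 < i \<Longrightarrow> w $ (i - 1) = Cmat_poly a b (Suc m) x"
    using i by (auto simp: w_def m_def Suc_diff_Suc)
  have "(Cmat a b k *\<^sub>v w) $ i = a (Suc m) * Cmat_poly a b m x
      + (if m = 0 then 0 else b (Suc m) * Cmat_poly a b (m - 1) x)
      + (if 0 < i then Cmat_poly a b (Suc m) x else 0)"
    unfolding index_Cmat_mult_vec[OF i w_carrier] using m w by auto
  also have "\<dots> = x * Cmat_poly a b m x - (if i = 0 then Cmat_poly a b k x else 0)"
    using m(3) by (auto simp: Cmat_poly_Suc[of a b m] algebra_simps)
  also have "\<dots> = (x \<cdot>\<^sub>v w - Cmat_poly a b k x \<cdot>\<^sub>v unit_vec k 0) $ i"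
    using i w(1) w_carrier by simp
  finally show "(Cmat a b k *\<^sub>v w) $ i = (x \<cdot>\<^sub>v w - Cmat_poly a b k x \<cdot>\<^sub>v unit_vec k 0) $ i" .
qed (simp add: w_def)

lemma Cmat_poly_recurrence_solution:
  fixes u :: "nat \<Rightarrow> real"
  assumes rec: "\<And>m. m < k \<Longrightarrow>
      u (Suc m) = (x - a (Suc m)) * u m - (if m = 0 then 0 else b (Suc m) * u (m - 1))"
    and "m \<le> k"
  shows "u m = Cmat_poly a b m x * u 0"
  using assms(2)
proof (induction m rule: less_induct)
  case (less m)
  show ?case
  proof (cases m)
    case (Suc m')
    then show ?thesis
      using rec[of m'] less.IH[of m'] less.IH[of "m' - 1"] less.prems
      by (cases "m' = 0") (auto simp: Cmat_poly_Suc[of a b m'] algebra_simps)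
  qed simp
qed

lemma Cmat_poly_root_if_eigenvalue:
  assumes "1 \<le> k" "eigenvalue (Cmat a b k) x"
  shows "Cmat_poly a b k x = 0"
proof -
  obtain v where v: "v \<in> carrier_vec k" "v \<noteq> 0\<^sub>v k" "Cmat a b k *\<^sub>v v = x \<cdot>\<^sub>v v"
    using assms(2) unfolding eigenvalue_def eigenvector_def by auto
  \<comment> \<open>Read bottom-up, the rows of the eigenvalue equation are the recurrence of
     \<open>Cmat_poly\<close>; the top row supplies the boundary value \<open>u k = 0\<close>.\<close>
  define u where "u m = (if m < k then v $ (k - 1 - m) else 0)" for m
  have "u (Suc m) = (x - a (Suc m)) * u m - (if m = 0 then 0 else b (Suc m) * u (m - 1))"
    if m: "m < k" for m
  proof -
    have i: "k - 1 - m < k" "k - (k - 1 - m) = Suc m" using m by auto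
    have "(Cmat a b k *\<^sub>v v) $ (k - 1 - m) = x * u m"
      using v(3) m v(1) by (simp add: u_def)
    moreover have "(Cmat a b k *\<^sub>v v) $ (k - 1 - m) = a (Suc m) * u m
        + (if m = 0 then 0 else b (Suc m) * u (m - 1)) + u (Suc m)"
      unfolding index_Cmat_mult_vec[OF i(1) v(1)] i(2) using m by (auto simp: u_def Suc_diff_Suc)
    ultimately show ?thesis by (simp add: algebra_simps)
  qed
  then have u: "u m = Cmat_poly a b m x * u 0" if "m \<le> k" for m
    using Cmat_poly_recurrence_solution that by blast
  have "u 0 \<noteq> 0"
  proof
    assume "u 0 = 0"
    then have "v $ i = 0" if "i < k" for i
      using u[of "k - 1 - i"] that by (simp add: u_def)
    then show False
      using v(1,2) by (auto simp: vec_eq_iff)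
  qed
  moreover have "Cmat_poly a b k x * u 0 = 0"
    using u[of k] by (simp add: u_def)
  ultimately show ?thesis by simp
qed

lemma eigenvalue_if_Cmat_poly_root:
  assumes "1 \<le> k" and root: "Cmat_poly a b k x = 0"
  shows "eigenvalue (Cmat a b k) x"
proof -
  define w where "w = vec k (\<lambda>i. Cmat_poly a b (k - 1 - i) x)"
  have "w $ (k - 1) = 1"
    using assms by (simp add: w_def)
  moreover have "0\<^sub>v k $ (k - 1) = (0 :: real)"
    using assms by simp
  ultimately have "w \<noteq> 0\<^sub>v k"
    by auto
  moreover have "Cmat a b k *\<^sub>v w = x \<cdot>\<^sub>v w"
    using Cmat_mult_vec_poly[OF assms(1), of a b x] root by (simp add: w_def vec_eq_iff)
  moreover have "w \<in> carrier_vec k" by (simp add: w_def)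
  ultimately show ?thesis
    unfolding eigenvalue_def eigenvector_def by auto
qed

lemma eigenvalue_Cmat_iff: "1 \<le> k \<Longrightarrow> eigenvalue (Cmat a b k) x \<longleftrightarrow> Cmat_poly a b k x = 0"
  using Cmat_poly_root_if_eigenvalue eigenvalue_if_Cmat_poly_root by blast

lemma spectrum_Cmat: "1 \<le> k \<Longrightarrow> spectrum (Cmat a b k) = {x. Cmat_poly a b k x = 0}"
  by (auto simp: spectrum_def eigenvalue_Cmat_iff)

lemma Cmat_poly_rec:
  assumes "2 \<le> k"
  shows "Cmat_poly a b k x = (x - a k) * Cmat_poly a b (k - 1) x - b k * Cmat_poly a b (k - 2) x"
proof -
  obtain j where "k = Suc (Suc j)"
    using assms by (metis add_2_eq_Suc le_Suc_ex)
  then show ?thesis by simp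
qed

lemma Cmat_poly_no_common_root:
  assumes "\<And>j. 2 \<le> j \<Longrightarrow> j \<le> k + 1 \<Longrightarrow> b j \<noteq> 0" and "Cmat_poly a b (k + 1) x = 0"
  shows "Cmat_poly a b k x \<noteq> 0"
  using assms
proof (induction k)
  case (Suc k)
  show ?case
  proof
    assume "Cmat_poly a b (Suc k) x = 0"
    then have "b (k + 2) * Cmat_poly a b k x = 0"
      using Suc.prems(2) Cmat_poly_rec[of "k + 2" a b x] by simp
    moreover have "b (k + 2) \<noteq> 0"
      using Suc.prems(1) by simp
    ultimately have "Cmat_poly a b k x = 0" by simp
    with Suc.IH Suc.prems(1) \<open>Cmat_poly a b (Suc k) x = 0\<close> show False by simp
  qed
qed simp

lemma Cmat_poly_root_propagate_2:
  assumes "2 \<le> k" "\<And>j. 2 \<le> j \<Longrightarrow> j < k \<Longrightarrow> b j \<noteq> 0" and root: "Cmat_poly a b (k - 2) x = 0"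
  shows "Cmat_poly a b k x = 0 \<longleftrightarrow> a k = x"
proof -
  define j where "j = k - 2"
  have k: "k - 1 = j + 1" "k - 2 = j" "j + 1 < k" using assms(1) by (simp_all add: j_def)
  have "Cmat_poly a b (j + 1) x \<noteq> 0"
    using Cmat_poly_no_common_root[of j b a x] assms(2) root k by fastforce
  moreover have "Cmat_poly a b k x = (x - a k) * Cmat_poly a b (j + 1) x"
    using Cmat_poly_rec[OF assms(1), of a b x] root k by simp
  ultimately show ?thesis by auto
qed

lemma Cmat_poly_root_propagate_3:
  assumes "3 \<le> k" "\<And>j. 2 \<le> j \<Longrightarrow> j < k - 1 \<Longrightarrow> b j \<noteq> 0" and root: "Cmat_poly a b (k - 3) x = 0"
  shows "Cmat_poly a b k x = 0 \<longleftrightarrow> b k = (x - a k) * (x - a (k - 1))"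
proof -
  define j where "j = k - 3"
  have k: "k - 1 = j + 2" "k - 2 = j + 1" "k - 3 = j" "j + 1 < k - 1" using assms(1) by (simp_all add: j_def)
  have nz: "Cmat_poly a b (j + 1) x \<noteq> 0"
    using Cmat_poly_no_common_root[of j b a x] assms(2) root k by fastforce
  have pk1: "Cmat_poly a b (k - 1) x = (x - a (k - 1)) * Cmat_poly a b (j + 1) x"
    using Cmat_poly_rec[of "k - 1" a b x] root assms(1) k by simp
  have pk: "Cmat_poly a b k x = (x - a k) * Cmat_poly a b (k - 1) x - b k * Cmat_poly a b (j + 1) x"
    using Cmat_poly_rec[of k a b x] assms(1) k by simp
  have "Cmat_poly a b k x = ((x - a k) * (x - a (k - 1)) - b k) * Cmat_poly a b (j + 1) x"
    unfolding pk pk1 by (simp add: algebra_simps)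
  with nz show ?thesis by auto
qed

lemma stepwise_iff:
  fixes n :: nat
  assumes "\<And>m. 1 \<le> m \<Longrightarrow> m \<le> n \<Longrightarrow> (\<And>i. 1 \<le> i \<Longrightarrow> i < m \<Longrightarrow> P i \<and> Q i) \<Longrightarrow> P m \<longleftrightarrow> Q m"
  shows "(\<forall>i. 1 \<le> i \<and> i \<le> n \<longrightarrow> P i) \<longleftrightarrow> (\<forall>i. 1 \<le> i \<and> i \<le> n \<longrightarrow> Q i)"
proof -
  have "P m \<and> Q m"
    if "(\<forall>i. 1 \<le> i \<and> i \<le> n \<longrightarrow> P i) \<or> (\<forall>i. 1 \<le> i \<and> i \<le> n \<longrightarrow> Q i)" "1 \<le> m" "m \<le> n" for m
    using that(2,3)
  proof (induction m rule: less_induct)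
    case (less m)
    then show ?case
      using assms[of m] that(1) by auto
  qed
  then show ?thesis by blast
qed

lemma alpha_seq_add_2: "alpha_seq \<alpha>1 \<alpha>2 (k + 2) = alpha_seq \<alpha>1 \<alpha>2 k"
  by (simp add: alpha_seq_def)

lemma beta_seq_add_3: "beta_seq \<beta>2 \<beta>3 \<beta>4 (k + 3) = beta_seq \<beta>2 \<beta>3 \<beta>4 k"
  by (simp add: beta_seq_def)

lemma alpha_seq_in: "alpha_seq \<alpha>1 \<alpha>2 k \<in> {\<alpha>1, \<alpha>2}"
  by (simp add: alpha_seq_def)

lemma beta_seq_in: "beta_seq \<beta>2 \<beta>3 \<beta>4 k \<in> {\<beta>2, \<beta>3, \<beta>4}"
  by (simp add: beta_seq_def)

lemma alpha_seq_consecutive_prod: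
  "(x - alpha_seq \<alpha>1 \<alpha>2 (k + 1)) * (x - alpha_seq \<alpha>1 \<alpha>2 k) = (x - \<alpha>1) * (x - \<alpha>2)"
  by (simp add: alpha_seq_def)

lemma alpha_beta_seq_cover:
  "{\<alpha>1, \<alpha>2, \<beta>2, \<beta>3, \<beta>4} = {alpha_seq \<alpha>1 \<alpha>2 k, alpha_seq \<alpha>1 \<alpha>2 (k + 1),
     beta_seq \<beta>2 \<beta>3 \<beta>4 k, beta_seq \<beta>2 \<beta>3 \<beta>4 (k + 1), beta_seq \<beta>2 \<beta>3 \<beta>4 (k + 2)}"
proof -
  have "k mod 3 = 0 \<or> k mod 3 = 1 \<or> k mod 3 = 2" by arith
  moreover have "(k + 1) mod 3 = (if k mod 3 = 2 then 0 else k mod 3 + 1)"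
    "(k + 2) mod 3 = (if k mod 3 = 0 then 2 else k mod 3 - 1)" by (auto simp: mod_Suc)
  ultimately show ?thesis
    by (auto simp: alpha_seq_def beta_seq_def)
qed

lemma monic_quadratic_roots_iff:
  fixes u v c d e :: real
  assumes "u \<noteq> v"
  shows "((u - c) * (u - d) - e = 0 \<and> (v - c) * (v - d) - e = 0) \<longleftrightarrow>
    c = u + v - d \<and> e = (v - d) * (d - u)"
proof
  assume roots: "(u - c) * (u - d) - e = 0 \<and> (v - c) * (v - d) - e = 0"
  have "(u - v) * (u + v - d - c) = ((u - c) * (u - d) - e) - ((v - c) * (v - d) - e)"
    by (simp add: algebra_simps)
  then have c: "c = u + v - d"
    using roots assms by simp
  moreover have "e = (u - (u + v - d)) * (u - d)"
    using roots c by simp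
  ultimately show "c = u + v - d \<and> e = (v - d) * (d - u)"
    by (simp add: algebra_simps)
next
  assume "c = u + v - d \<and> e = (v - d) * (d - u)"
  then have c: "c = u + v - d" and e: "e = (v - d) * (d - u)" by simp_all
  show "(u - c) * (u - d) - e = 0 \<and> (v - c) * (v - d) - e = 0"
    unfolding c e by (simp add: algebra_simps)
qed

lemma zero_less_mult_iff_same_sign:
  fixes u v :: real
  assumes "u \<noteq> 0" "v \<noteq> 0"
  shows "0 < u * v \<longleftrightarrow> (0 < u \<longleftrightarrow> 0 < v)"
  using assms by (auto simp: zero_less_mult_iff)

lemma zero_less_divide_iff_same_sign:
  fixes u v :: real
  assumes "u \<noteq> 0" "v \<noteq> 0"
  shows "0 < u / v \<longleftrightarrow> (0 < u \<longleftrightarrow> 0 < v)"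
  using assms by (auto simp: zero_less_divide_iff)

lemma zero_less_mult_diff_iff:
  fixes x y z :: real
  shows "0 < (x - y) * (y - z) \<longleftrightarrow> (z < y \<and> y < x) \<or> (x < y \<and> y < z)"
  by (auto simp: zero_less_mult_iff)

lemma setB_if_positive:
  assumes dist: "distinct [\<alpha>1, \<alpha>2, \<beta>2, \<beta>3, \<beta>4]" and sum: "\<alpha>2 + \<beta>2 \<noteq> \<beta>3 + \<beta>4"
    and b2: "0 < (\<beta>2 - \<alpha>1) * (\<alpha>1 - \<alpha>2)"
    and b3: "0 < (\<beta>3 - \<alpha>2) * (\<beta>3 - \<beta>2)"
    and b4: "0 < (\<beta>4 - \<alpha>1) * (\<beta>3 - \<beta>4) * (\<alpha>2 + \<beta>2 - \<beta>3 - \<beta>4) / (\<beta>4 - \<beta>2)"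
  shows "(\<alpha>1, \<alpha>2, \<beta>2, \<beta>3, \<beta>4) \<in> setB"
proof -
  have order2: "(\<beta>2 < \<alpha>1 \<and> \<alpha>1 < \<alpha>2) \<or> (\<alpha>2 < \<alpha>1 \<and> \<alpha>1 < \<beta>2)"
    using b2 zero_less_mult_diff_iff by blast
  have order3: "(\<alpha>2 < \<beta>3 \<and> \<beta>2 < \<beta>3) \<or> (\<beta>3 < \<alpha>2 \<and> \<beta>3 < \<beta>2)"
    using b3 by (auto simp: zero_less_mult_iff)
  have nonzero: "\<beta>4 - \<alpha>1 \<noteq> 0" "\<beta>3 - \<beta>4 \<noteq> 0" "\<alpha>2 + \<beta>2 - \<beta>3 - \<beta>4 \<noteq> 0" "\<beta>4 - \<beta>2 \<noteq> 0"
    using dist sum by auto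
  have order4: "(((\<alpha>1 < \<beta>4) \<longleftrightarrow> (\<beta>4 < \<beta>3)) \<longleftrightarrow> (\<beta>3 + \<beta>4 < \<alpha>2 + \<beta>2)) \<longleftrightarrow> (\<beta>2 < \<beta>4)"
  proof -
    have "0 < \<alpha>2 + \<beta>2 - \<beta>3 - \<beta>4 \<longleftrightarrow> \<beta>3 + \<beta>4 < \<alpha>2 + \<beta>2" by linarith
    then show ?thesis
      using b4 nonzero by (simp add: zero_less_divide_iff_same_sign zero_less_mult_iff_same_sign)
  qed
  have neq: "\<alpha>1 \<noteq> \<alpha>2" "\<alpha>1 \<noteq> \<beta>2" "\<alpha>1 \<noteq> \<beta>3" "\<alpha>1 \<noteq> \<beta>4" "\<alpha>2 \<noteq> \<beta>2" "\<alpha>2 \<noteq> \<beta>3" "\<alpha>2 \<noteq> \<beta>4"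
    "\<beta>2 \<noteq> \<beta>3" "\<beta>2 \<noteq> \<beta>4" "\<beta>3 \<noteq> \<beta>4"
    using dist by auto
  show ?thesis
    unfolding setB_def mem_Collect_eq case_prod_conv
    by (intro conjI dist) (use order2 order3 order4 neq sum in smt)
qed

lemma setB3_if_positive:
  assumes b2: "0 < (\<beta>2 - \<alpha>1) * (\<alpha>1 - \<alpha>2)"
    and b3: "0 < (\<beta>3 - \<alpha>2) * (\<beta>3 - \<beta>2)"
  shows "(\<alpha>1, \<alpha>2, \<beta>2, \<beta>3) \<in> setB3"
proof -
  have order2: "(\<beta>2 < \<alpha>1 \<and> \<alpha>1 < \<alpha>2) \<or> (\<alpha>2 < \<alpha>1 \<and> \<alpha>1 < \<beta>2)"
    using b2 zero_less_mult_diff_iff by blast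
  have order3: "(\<alpha>2 < \<beta>3 \<and> \<beta>2 < \<beta>3) \<or> (\<beta>3 < \<alpha>2 \<and> \<beta>3 < \<beta>2)"
    using b3 by (auto simp: zero_less_mult_iff)
  consider "\<beta>2 < \<alpha>1" "\<alpha>1 < \<alpha>2" "\<alpha>2 < \<beta>3" | "\<beta>2 < \<alpha>1" "\<alpha>1 < \<alpha>2" "\<beta>3 < \<beta>2"
    | "\<alpha>2 < \<alpha>1" "\<alpha>1 < \<beta>2" "\<beta>2 < \<beta>3" | "\<alpha>2 < \<alpha>1" "\<alpha>1 < \<beta>2" "\<beta>3 < \<alpha>2"
    using order2 order3 by linarith
  then have "\<exists>\<beta>4. (\<alpha>1, \<alpha>2, \<beta>2, \<beta>3, \<beta>4) \<in> setB"
  proof cases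
    case 1
    then have "(\<alpha>1, \<alpha>2, \<beta>2, \<beta>3, \<beta>3 + 1) \<in> setB" by (simp add: setB_def)
    then show ?thesis ..
  next
    case 2
    then have "(\<alpha>1, \<alpha>2, \<beta>2, \<beta>3, (\<beta>2 + \<alpha>1) / 2) \<in> setB" by (simp add: setB_def)
    then show ?thesis ..
  next
    case 3
    then have "(\<alpha>1, \<alpha>2, \<beta>2, \<beta>3, \<beta>3 + 1) \<in> setB" by (simp add: setB_def)
    then show ?thesis ..
  next
    case 4
    then have "(\<alpha>1, \<alpha>2, \<beta>2, \<beta>3, \<beta>3 - 1) \<in> setB" by (simp add: setB_def)
    then show ?thesis ..
  qed
  then show ?thesis by (simp add: setB3_def)
qed

lemma setB2_if_positive:
  assumes "0 < (\<beta>2 - \<alpha>1) * (\<alpha>1 - \<alpha>2)"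
  shows "(\<alpha>1, \<alpha>2, \<beta>2) \<in> setB2"
proof -
  have "(\<beta>2 < \<alpha>1 \<and> \<alpha>1 < \<alpha>2) \<or> (\<alpha>2 < \<alpha>1 \<and> \<alpha>1 < \<beta>2)"
    using assms zero_less_mult_diff_iff by blast
  then have "(\<alpha>1, \<alpha>2, \<beta>2, \<alpha>2 + 1, \<alpha>2 + 2) \<in> setB \<or> (\<alpha>1, \<alpha>2, \<beta>2, \<beta>2 + 1, \<beta>2 + 2) \<in> setB"
    by (elim disjE) (simp_all add: setB_def)
  then show ?thesis
    unfolding setB2_def by blast
qed

locale prescribed_spectra =
  fixes \<alpha>1 \<alpha>2 \<beta>2 \<beta>3 \<beta>4 :: real and a b :: "nat \<Rightarrow> real" and n :: nat
  assumes distinct: "distinct [\<alpha>1, \<alpha>2, \<beta>2, \<beta>3, \<beta>4]"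
    and b_nonzero: "\<And>i. 2 \<le> i \<Longrightarrow> i \<le> n \<Longrightarrow> b i \<noteq> 0"
begin

abbreviation \<alpha> :: "nat \<Rightarrow> real" where "\<alpha> \<equiv> alpha_seq \<alpha>1 \<alpha>2"
abbreviation \<beta> :: "nat \<Rightarrow> real" where "\<beta> \<equiv> beta_seq \<beta>2 \<beta>3 \<beta>4"
abbreviation p :: "nat \<Rightarrow> real \<Rightarrow> real" where "p \<equiv> Cmat_poly a b"

definition a_param :: "nat \<Rightarrow> real" where
  "a_param i = (if i = 2 then \<alpha>2 + \<beta>2 - \<alpha>1 else \<alpha> i)"

definition b_param :: "nat \<Rightarrow> real" where
  "b_param i =
    (if i = 2 then (\<beta>2 - \<alpha>1) * (\<alpha>1 - \<alpha>2)
     else if i = 3 then (\<beta>3 - \<alpha>2) * (\<beta>3 - \<beta>2)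
     else if i = 4 then (\<beta>4 - \<alpha>1) * (\<beta>3 - \<beta>4) * (\<alpha>2 + \<beta>2 - \<beta>3 - \<beta>4) / (\<beta>4 - \<beta>2)
     else (\<beta> i - \<alpha>1) * (\<beta> i - \<alpha>2))"

definition has_params :: "nat \<Rightarrow> bool" where
  "has_params i \<longleftrightarrow> a i = a_param i \<and> (2 \<le> i \<longrightarrow> b i = b_param i)"

definition has_roots :: "nat \<Rightarrow> bool" where
  "has_roots i \<longleftrightarrow> p i (\<alpha> i) = 0 \<and> (2 \<le> i \<longrightarrow> p i (\<beta> i) = 0)"

lemma b_nonzero_below: "k \<le> n \<Longrightarrow> 2 \<le> j \<Longrightarrow> j < k \<Longrightarrow> b j \<noteq> 0"
  using b_nonzero by simp

lemma alpha_ne_beta: "\<alpha> i \<noteq> \<beta> j"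
  using alpha_seq_in[of \<alpha>1 \<alpha>2 i] beta_seq_in[of \<beta>2 \<beta>3 \<beta>4 j] distinct by auto

lemma Cmat_poly_2_params:
  assumes "has_params 1" "has_params 2"
  shows "p 2 x = (x - \<alpha>2) * (x - \<beta>2)"
proof -
  have a1: "a 1 = \<alpha>1" and a2: "a 2 = \<alpha>2 + \<beta>2 - \<alpha>1" and b2: "b 2 = (\<beta>2 - \<alpha>1) * (\<alpha>1 - \<alpha>2)"
    using assms by (simp_all add: has_params_def a_param_def b_param_def alpha_seq_def)
  have "p 2 x = (x - a 2) * (x - a 1) - b 2"
    using Cmat_poly_rec[of 2 a b x] by simp
  then show ?thesis
    unfolding a1 a2 b2 by (simp add: algebra_simps)
qed

lemma Cmat_poly_3_params:
  assumes "has_params 1" "has_params 2" "has_params 3"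
  shows "p 3 x = (x - \<alpha>1) * ((x - \<alpha>2) * (x - \<beta>2) - (\<beta>3 - \<alpha>2) * (\<beta>3 - \<beta>2))"
proof -
  have a1: "a 1 = \<alpha>1" and a3: "a 3 = \<alpha>1" and b3: "b 3 = (\<beta>3 - \<alpha>2) * (\<beta>3 - \<beta>2)"
    using assms by (simp_all add: has_params_def a_param_def b_param_def alpha_seq_def)
  have "p 3 x = (x - a 3) * p 2 x - b 3 * p 1 x"
    using Cmat_poly_rec[of 3 a b x] by simp
  then show ?thesis
    unfolding Cmat_poly_2_params[OF assms(1,2)] a3 b3 using a1 by (simp add: algebra_simps)
qed

lemma roots_iff_params_1: "has_roots 1 \<longleftrightarrow> has_params 1"
  by (auto simp: has_roots_def has_params_def a_param_def alpha_seq_def)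

lemma roots_iff_params_2:
  assumes "has_params 1"
  shows "has_roots 2 \<longleftrightarrow> has_params 2"
proof -
  have "\<alpha>2 \<noteq> \<beta>2" "a 1 = \<alpha>1"
    using distinct assms by (auto simp: has_params_def a_param_def alpha_seq_def)
  moreover have "p 2 x = (x - a 2) * (x - a 1) - b 2" for x
    using Cmat_poly_rec[of 2 a b x] by simp
  ultimately show ?thesis
    using monic_quadratic_roots_iff[of \<alpha>2 \<beta>2 "a 2" \<alpha>1 "b 2"]
    by (auto simp: has_roots_def has_params_def a_param_def b_param_def alpha_seq_def beta_seq_def)
qed

lemma roots_iff_params_3:
  assumes "3 \<le> n" "has_roots 1" "has_params 1" "has_params 2"
  shows "has_roots 3 \<longleftrightarrow> has_params 3"
proof -
  have a3: "p 3 \<alpha>1 = 0 \<longleftrightarrow> a 3 = \<alpha>1"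
    using Cmat_poly_root_propagate_2[of 3 b a \<alpha>1] b_nonzero_below[of 3] assms(1,2)
    by (simp add: has_roots_def alpha_seq_def)
  have "a 3 = \<alpha>1 \<Longrightarrow> p 3 \<beta>3 = (\<beta>3 - \<alpha>1) * ((\<beta>3 - \<alpha>2) * (\<beta>3 - \<beta>2) - b 3)"
    using Cmat_poly_rec[of 3 a b \<beta>3] assms(3) Cmat_poly_2_params[OF assms(3,4)]
    by (simp add: has_params_def a_param_def alpha_seq_def algebra_simps)
  moreover have "\<beta>3 \<noteq> \<alpha>1" using distinct by auto
  ultimately show ?thesis
    using a3 by (auto simp: has_roots_def has_params_def a_param_def b_param_def alpha_seq_def beta_seq_def)
qed

lemma roots_iff_params_4:
  assumes "4 \<le> n" "has_roots 2" "has_params 1" "has_params 2" "has_params 3"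
  shows "has_roots 4 \<longleftrightarrow> has_params 4"
proof -
  have a4: "p 4 \<alpha>2 = 0 \<longleftrightarrow> a 4 = \<alpha>2"
    using Cmat_poly_root_propagate_2[of 4 b a \<alpha>2] b_nonzero_below[of 4] assms(1,2)
    by (simp add: has_roots_def alpha_seq_def)
  have "(\<beta>4 - \<alpha>2) * (\<beta>4 - \<beta>2) - (\<beta>3 - \<alpha>2) * (\<beta>3 - \<beta>2) = (\<beta>4 - \<beta>3) * (\<beta>4 + \<beta>3 - \<alpha>2 - \<beta>2)"
    by (simp add: algebra_simps)
  then have "a 4 = \<alpha>2 \<Longrightarrow> p 4 \<beta>4 = (\<beta>4 - \<alpha>2) *
      ((\<beta>4 - \<alpha>1) * (\<beta>3 - \<beta>4) * (\<alpha>2 + \<beta>2 - \<beta>3 - \<beta>4) - b 4 * (\<beta>4 - \<beta>2))"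
    using Cmat_poly_rec[of 4 a b \<beta>4] Cmat_poly_2_params[OF assms(3,4)] Cmat_poly_3_params[OF assms(3-5)]
    by (simp add: algebra_simps)
  moreover have "\<beta>4 \<noteq> \<alpha>2" "\<beta>4 \<noteq> \<beta>2" using distinct by auto
  ultimately have "has_roots 4 \<longleftrightarrow> a 4 = \<alpha>2 \<and>
      (\<beta>4 - \<alpha>1) * (\<beta>3 - \<beta>4) * (\<alpha>2 + \<beta>2 - \<beta>3 - \<beta>4) - b 4 * (\<beta>4 - \<beta>2) = 0"
    using a4 by (auto simp: has_roots_def alpha_seq_def beta_seq_def)
  also have "\<dots> \<longleftrightarrow> has_params 4"
    using \<open>\<beta>4 \<noteq> \<beta>2\<close>
    by (auto simp: has_params_def a_param_def b_param_def alpha_seq_def field_simps)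
  finally show ?thesis .
qed

lemma roots_iff_params_ge_5:
  assumes "5 \<le> m" "m \<le> n" and below: "\<And>i. 1 \<le> i \<Longrightarrow> i < m \<Longrightarrow> has_roots i \<and> has_params i"
  shows "has_roots m \<longleftrightarrow> has_params m"
proof -
  have "m - 2 + 2 = m" "m - 3 + 3 = m"
    using assms(1) by simp_all
  then have \<alpha>m: "\<alpha> m = \<alpha> (m - 2)" and \<beta>m: "\<beta> m = \<beta> (m - 3)"
    using alpha_seq_add_2[of \<alpha>1 \<alpha>2 "m - 2"] beta_seq_add_3[of \<beta>2 \<beta>3 \<beta>4 "m - 3"] by simp_all
  have a_m: "p m (\<alpha> m) = 0 \<longleftrightarrow> a m = \<alpha> m"
    using Cmat_poly_root_propagate_2[of m b a "\<alpha> m"] b_nonzero_below[of m] below[of "m - 2"] assms(1,2)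
    by (simp add: \<alpha>m has_roots_def)
  have "p m (\<beta> m) = 0 \<longleftrightarrow> b m = (\<beta> m - a m) * (\<beta> m - a (m - 1))"
    using Cmat_poly_root_propagate_3[of m b a "\<beta> m"] b_nonzero_below[of m] below[of "m - 3"] assms(1,2)
    by (simp add: \<beta>m has_roots_def)
  moreover have "a (m - 1) = \<alpha> (m - 1)"
    using below[of "m - 1"] assms(1) by (auto simp: has_params_def a_param_def)
  moreover have "(\<beta> m - \<alpha> m) * (\<beta> m - \<alpha> (m - 1)) = (\<beta> m - \<alpha>1) * (\<beta> m - \<alpha>2)"
    using alpha_seq_consecutive_prod[of "\<beta> m" \<alpha>1 \<alpha>2 "m - 1"] assms(1) by (simp add: mult.commute)
  ultimately show ?thesis
    using a_m assms(1) by (auto simp: has_roots_def has_params_def a_param_def b_param_def)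
qed

lemma roots_iff_params:
  "(\<forall>i. 1 \<le> i \<and> i \<le> n \<longrightarrow> has_roots i) \<longleftrightarrow> (\<forall>i. 1 \<le> i \<and> i \<le> n \<longrightarrow> has_params i)"
proof (rule stepwise_iff)
  fix m assume m: "1 \<le> m" "m \<le> n"
    and below: "\<And>i. 1 \<le> i \<Longrightarrow> i < m \<Longrightarrow> has_roots i \<and> has_params i"
  consider "m = 1" | "m = 2" | "m = 3" | "m = 4" | "5 \<le> m"
    using m(1) by linarith
  then show "has_roots m \<longleftrightarrow> has_params m"
  proof cases
    case 1
    then show ?thesis using roots_iff_params_1 by simp
  next
    case 2
    then show ?thesis using roots_iff_params_2 below[of 1] by simp
  next
    case 3
    then show ?thesis using roots_iff_params_3 m(2) below[of 1] below[of 2] by simp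
  next
    case 4
    then show ?thesis using roots_iff_params_4 m(2) below[of 1] below[of 2] below[of 3] by simp
  next
    case 5
    then show ?thesis using roots_iff_params_ge_5 m(2) below by blast
  qed
qed

lemma roots_if_params:
  assumes "\<forall>i. 1 \<le> i \<and> i \<le> n \<longrightarrow> has_params i" "1 \<le> j" "j \<le> n"
  shows "p j (\<alpha> j) = 0" "2 \<le> j \<Longrightarrow> p j (\<beta> j) = 0"
  using roots_iff_params assms by (auto simp: has_roots_def)

lemma next_beta_not_root:
  assumes sum: "\<alpha>2 + \<beta>2 \<noteq> \<beta>3 + \<beta>4" and params: "\<forall>i. 1 \<le> i \<and> i \<le> n \<longrightarrow> has_params i"
    and i: "2 \<le> i" "i \<le> n"
  shows "p i (\<beta> (i + 1)) \<noteq> 0"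
proof -
  consider "i = 2" | "i = 3" | "4 \<le> i" using i by linarith
  then show ?thesis
  proof cases
    case 1
    then show ?thesis
      using Cmat_poly_2_params[of \<beta>3] params i distinct by (auto simp: beta_seq_def)
  next
    case 2
    have "p 3 \<beta>4 = (\<beta>4 - \<alpha>1) * (\<beta>4 - \<beta>3) * (\<beta>4 + \<beta>3 - \<alpha>2 - \<beta>2)"
      using Cmat_poly_3_params[of \<beta>4] params i 2 by (simp add: algebra_simps)
    moreover have "\<beta>4 + \<beta>3 - \<alpha>2 - \<beta>2 \<noteq> 0" using sum by simp
    ultimately show ?thesis using 2 distinct by (auto simp: beta_seq_def)
  next
    case 3
    have "\<beta> (i + 1) = \<beta> (i - 2)"
      using beta_seq_add_3[of \<beta>2 \<beta>3 \<beta>4 "i - 2"] 3 by simp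
    moreover have "a i = \<alpha> i"
      using params i 3 by (simp add: has_params_def a_param_def)
    moreover have "p i (\<beta> (i - 2)) = 0 \<longleftrightarrow> a i = \<beta> (i - 2)"
      using Cmat_poly_root_propagate_2[of i b a "\<beta> (i - 2)"] b_nonzero i
        roots_if_params(2)[OF params, of "i - 2"] 3
      by simp
    ultimately show ?thesis using alpha_ne_beta by simp
  qed
qed

lemma other_values_not_roots:
  assumes sum: "\<alpha>2 + \<beta>2 \<noteq> \<beta>3 + \<beta>4" and params: "\<forall>i. 1 \<le> i \<and> i \<le> n \<longrightarrow> has_params i"
    and i: "2 \<le> i" "i \<le> n"
  shows "p i (\<alpha> (i + 1)) \<noteq> 0" "p i (\<beta> (i + 1)) \<noteq> 0" "p i (\<beta> (i + 2)) \<noteq> 0"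
proof -
  have prev_root: "p i x \<noteq> 0" if "p (i - 1) x = 0" for x
    using Cmat_poly_no_common_root[of "i - 1" b a x] b_nonzero i that by auto
  have "\<alpha> (i + 1) = \<alpha> (i - 1)"
    using alpha_seq_add_2[of \<alpha>1 \<alpha>2 "i - 1"] i by simp
  then show "p i (\<alpha> (i + 1)) \<noteq> 0"
    using prev_root roots_if_params(1)[OF params, of "i - 1"] i by simp
  show "p i (\<beta> (i + 1)) \<noteq> 0"
    using next_beta_not_root[OF sum params i] .
  show "p i (\<beta> (i + 2)) \<noteq> 0"
  proof (cases "i = 2")
    case True
    then show ?thesis
      using Cmat_poly_2_params[of \<beta>4] params i distinct by (auto simp: beta_seq_def)
  next
    case False
    have "\<beta> (i + 2) = \<beta> (i - 1)"
      using beta_seq_add_3[of \<beta>2 \<beta>3 \<beta>4 "i - 1"] i by simp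
    then show ?thesis
      using prev_root roots_if_params(2)[OF params, of "i - 1"] i False by simp
  qed
qed

lemma root_conditions_iff_params:
  assumes sum: "\<alpha>2 + \<beta>2 \<noteq> \<beta>3 + \<beta>4" and "1 \<le> n"
  shows "(a 1 = \<alpha>1 \<and> (\<forall>i. 2 \<le> i \<and> i \<le> n \<longrightarrow>
            {x \<in> {\<alpha>1, \<alpha>2, \<beta>2, \<beta>3, \<beta>4}. p i x = 0} = {\<alpha> i, \<beta> i}))
    \<longleftrightarrow> (\<forall>i. 1 \<le> i \<and> i \<le> n \<longrightarrow> has_params i)"
    (is "?spectral \<longleftrightarrow> ?params")
proof
  assume spectral: ?spectral
  have "has_roots i" if "1 \<le> i" "i \<le> n" for i
  proof (cases "i = 1")
    case True
    then show ?thesis using spectral by (simp add: has_roots_def alpha_seq_def)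
  next
    case False
    then have "{x \<in> {\<alpha>1, \<alpha>2, \<beta>2, \<beta>3, \<beta>4}. p i x = 0} = {\<alpha> i, \<beta> i}"
      using spectral that by simp
    then show ?thesis by (auto simp: has_roots_def)
  qed
  then show ?params using roots_iff_params by blast
next
  assume params: ?params
  have "a 1 = \<alpha>1"
    using params assms(2) by (auto simp: has_params_def a_param_def alpha_seq_def)
  moreover have "{x \<in> {\<alpha>1, \<alpha>2, \<beta>2, \<beta>3, \<beta>4}. p i x = 0} = {\<alpha> i, \<beta> i}"
    if "2 \<le> i" "i \<le> n" for i
  proof
    show "{\<alpha> i, \<beta> i} \<subseteq> {x \<in> {\<alpha>1, \<alpha>2, \<beta>2, \<beta>3, \<beta>4}. p i x = 0}"
      using roots_if_params[OF params, of i] that alpha_seq_in[of \<alpha>1 \<alpha>2 i] beta_seq_in[of \<beta>2 \<beta>3 \<beta>4 i]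
      by auto
    show "{x \<in> {\<alpha>1, \<alpha>2, \<beta>2, \<beta>3, \<beta>4}. p i x = 0} \<subseteq> {\<alpha> i, \<beta> i}"
      using other_values_not_roots[OF sum params that] alpha_beta_seq_cover[of \<alpha>1 \<alpha>2 \<beta>2 \<beta>3 \<beta>4 i]
      by auto
  qed
  ultimately show ?spectral by blast
qed

lemma has_params_iff:
  assumes "1 \<le> i"
  shows "has_params i \<longleftrightarrow>
    (odd i \<longrightarrow> a i = \<alpha>1) \<and> (i = 2 \<longrightarrow> a 2 = - \<alpha>1 + \<alpha>2 + \<beta>2) \<and> (2 < i \<and> even i \<longrightarrow> a i = \<alpha>2) \<and>
    (i = 2 \<longrightarrow> b 2 = (\<beta>2 - \<alpha>1) * (\<alpha>1 - \<alpha>2)) \<and> (i = 3 \<longrightarrow> b 3 = (\<beta>3 - \<alpha>2) * (\<beta>3 - \<beta>2)) \<and>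
    (i = 4 \<longrightarrow> b 4 = (\<beta>4 - \<alpha>1) * (\<beta>3 - \<beta>4) * (\<alpha>2 + \<beta>2 - \<beta>3 - \<beta>4) / (\<beta>4 - \<beta>2)) \<and>
    (4 < i \<longrightarrow> b i = (\<beta> i - \<alpha>1) * (\<beta> i - \<alpha>2))"
  using assms by (auto simp: has_params_def a_param_def b_param_def alpha_seq_def)

lemma params_iff:
  "(\<forall>i. 1 \<le> i \<and> i \<le> n \<longrightarrow> has_params i) \<longleftrightarrow>
    ((\<forall>i. 1 \<le> i \<and> i \<le> n \<and> odd i \<longrightarrow> a i = \<alpha>1) \<and>
     (2 \<le> n \<longrightarrow> a 2 = - \<alpha>1 + \<alpha>2 + \<beta>2) \<and>
     (\<forall>i. 2 < i \<and> i \<le> n \<and> even i \<longrightarrow> a i = \<alpha>2) \<and>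
     (2 \<le> n \<longrightarrow> b 2 = (\<beta>2 - \<alpha>1) * (\<alpha>1 - \<alpha>2)) \<and>
     (3 \<le> n \<longrightarrow> b 3 = (\<beta>3 - \<alpha>2) * (\<beta>3 - \<beta>2)) \<and>
     (4 \<le> n \<longrightarrow> b 4 = (\<beta>4 - \<alpha>1) * (\<beta>3 - \<beta>4) * (\<alpha>2 + \<beta>2 - \<beta>3 - \<beta>4) / (\<beta>4 - \<beta>2)) \<and>
     (\<forall>i. 4 < i \<and> i \<le> n \<longrightarrow> b i = (\<beta> i - \<alpha>1) * (\<beta> i - \<alpha>2)))"
  (is "?params \<longleftrightarrow> ?explicit")
proof
  assume ?params
  then have params: "has_params i" if "1 \<le> i" "i \<le> n" for i
    using that by blast
  show ?explicit
  proof (intro conjI allI impI)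
    fix i assume "1 \<le> i \<and> i \<le> n \<and> odd i"
    then show "a i = \<alpha>1" using params[of i] has_params_iff[of i] by simp
  next
    fix i assume "2 < i \<and> i \<le> n \<and> even i"
    then show "a i = \<alpha>2" using params[of i] has_params_iff[of i] by simp
  next
    fix i assume "4 < i \<and> i \<le> n"
    then show "b i = (\<beta> i - \<alpha>1) * (\<beta> i - \<alpha>2)" using params[of i] has_params_iff[of i] by simp
  qed (use params[of 2] params[of 3] params[of 4] has_params_iff[of 2] has_params_iff[of 3]
      has_params_iff[of 4] in simp_all)
next
  assume ?explicit
  then show ?params
    using has_params_iff by simp
qed

lemma spectrum_conditions_iff_params:
  assumes "\<alpha>2 + \<beta>2 \<noteq> \<beta>3 + \<beta>4" and "1 \<le> n"
  shows "(spectrum (Cmat a b 1) = {\<alpha>1} \<and>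
      (\<forall>i. 2 \<le> i \<and> i \<le> n \<longrightarrow> spectrum (Cmat a b i) \<inter> {\<alpha>1, \<alpha>2, \<beta>2, \<beta>3, \<beta>4} = {\<alpha> i, \<beta> i}))
    \<longleftrightarrow> (\<forall>i. 1 \<le> i \<and> i \<le> n \<longrightarrow> has_params i)"
proof -
  define \<Lambda> where "\<Lambda> = {\<alpha>1, \<alpha>2, \<beta>2, \<beta>3, \<beta>4}"
  have "spectrum (Cmat a b 1) = {a 1}"
    using spectrum_Cmat[of 1 a b] by (simp add: One_nat_def)
  then have "spectrum (Cmat a b 1) = {\<alpha>1} \<longleftrightarrow> a 1 = \<alpha>1"
    by auto
  moreover have "spectrum (Cmat a b i) \<inter> \<Lambda> = {x \<in> \<Lambda>. p i x = 0}" if "2 \<le> i" for i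
    using spectrum_Cmat[of i a b] that by auto
  ultimately have "(spectrum (Cmat a b 1) = {\<alpha>1} \<and>
      (\<forall>i. 2 \<le> i \<and> i \<le> n \<longrightarrow> spectrum (Cmat a b i) \<inter> \<Lambda> = {\<alpha> i, \<beta> i}))
    \<longleftrightarrow> (\<forall>i. 1 \<le> i \<and> i \<le> n \<longrightarrow> has_params i)"
    using root_conditions_iff_params[OF assms, folded \<Lambda>_def] by (simp cong: conj_cong)
  then show ?thesis
    by (simp only: \<Lambda>_def)
qed

lemma params_imp_setB:
  assumes "\<alpha>2 + \<beta>2 \<noteq> \<beta>3 + \<beta>4"
    and params: "\<forall>i. 1 \<le> i \<and> i \<le> n \<longrightarrow> has_params i"
    and b_pos: "\<forall>i. 2 \<le> i \<and> i \<le> n \<longrightarrow> 0 < b i"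
  shows "(4 \<le> n \<longrightarrow> (\<alpha>1, \<alpha>2, \<beta>2, \<beta>3, \<beta>4) \<in> setB)
    \<and> (n = 3 \<longrightarrow> (\<alpha>1, \<alpha>2, \<beta>2, \<beta>3) \<in> setB3) \<and> (n = 2 \<longrightarrow> (\<alpha>1, \<alpha>2, \<beta>2) \<in> setB2)"
proof -
  have b_param_pos: "0 < b_param i" if "2 \<le> i" "i \<le> n" for i
    using params b_pos that by (simp add: has_params_def)
  have "2 \<le> n \<Longrightarrow> 0 < (\<beta>2 - \<alpha>1) * (\<alpha>1 - \<alpha>2)"
    and "3 \<le> n \<Longrightarrow> 0 < (\<beta>3 - \<alpha>2) * (\<beta>3 - \<beta>2)"
    and "4 \<le> n \<Longrightarrow> 0 < (\<beta>4 - \<alpha>1) * (\<beta>3 - \<beta>4) * (\<alpha>2 + \<beta>2 - \<beta>3 - \<beta>4) / (\<beta>4 - \<beta>2)"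
    using b_param_pos[of 2] b_param_pos[of 3] b_param_pos[of 4] by (simp_all add: b_param_def)
  then show ?thesis
    using setB_if_positive[OF distinct assms(1)] setB3_if_positive setB2_if_positive by simp
qed

end

theorem mainTheorem5:
  fixes \<alpha>1 \<alpha>2 \<beta>2 \<beta>3 \<beta>4 :: real and n :: nat and a b :: "nat \<Rightarrow> real"
  assumes dist: "distinct [\<alpha>1, \<alpha>2, \<beta>2, \<beta>3, \<beta>4]"
    and sum_ne: "\<alpha>2 + \<beta>2 \<noteq> \<beta>3 + \<beta>4"
    and n: "n \<ge> 1"
    and bpos: "\<forall>i. 2 \<le> i \<and> i \<le> n \<longrightarrow> b i > 0"
  defines "\<Lambda> \<equiv> {\<alpha>1, \<alpha>2, \<beta>2, \<beta>3, \<beta>4}"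
  shows "((spectrum (Cmat a b 1) = {\<alpha>1} \<and>
           (\<forall>i. 2 \<le> i \<and> i \<le> n \<longrightarrow>
              spectrum (Cmat a b i) \<inter> \<Lambda> = {alpha_seq \<alpha>1 \<alpha>2 i, beta_seq \<beta>2 \<beta>3 \<beta>4 i}))
      \<longleftrightarrow>
          ((\<forall>i. 1 \<le> i \<and> i \<le> n \<and> odd i \<longrightarrow> a i = \<alpha>1) \<and>
           (2 \<le> n \<longrightarrow> a 2 = - \<alpha>1 + \<alpha>2 + \<beta>2) \<and>
           (\<forall>i. 2 < i \<and> i \<le> n \<and> even i \<longrightarrow> a i = \<alpha>2) \<and>
           (2 \<le> n \<longrightarrow> b 2 = (\<beta>2 - \<alpha>1) * (\<alpha>1 - \<alpha>2)) \<and>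
           (3 \<le> n \<longrightarrow> b 3 = (\<beta>3 - \<alpha>2) * (\<beta>3 - \<beta>2)) \<and>
           (4 \<le> n \<longrightarrow> b 4 = (\<beta>4 - \<alpha>1) * (\<beta>3 - \<beta>4) * (\<alpha>2 + \<beta>2 - \<beta>3 - \<beta>4) / (\<beta>4 - \<beta>2)) \<and>
           (\<forall>i. 4 < i \<and> i \<le> n \<longrightarrow>
              b i = (beta_seq \<beta>2 \<beta>3 \<beta>4 i - \<alpha>1) * (beta_seq \<beta>2 \<beta>3 \<beta>4 i - \<alpha>2))))
      \<and>
      ((spectrum (Cmat a b 1) = {\<alpha>1} \<and>
           (\<forall>i. 2 \<le> i \<and> i \<le> n \<longrightarrow>
              spectrum (Cmat a b i) \<inter> \<Lambda> = {alpha_seq \<alpha>1 \<alpha>2 i, beta_seq \<beta>2 \<beta>3 \<beta>4 i}))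
        \<longrightarrow> (4 \<le> n \<longrightarrow> (\<alpha>1, \<alpha>2, \<beta>2, \<beta>3, \<beta>4) \<in> setB)
          \<and> (n = 3 \<longrightarrow> (\<alpha>1, \<alpha>2, \<beta>2, \<beta>3) \<in> setB3)
          \<and> (n = 2 \<longrightarrow> (\<alpha>1, \<alpha>2, \<beta>2) \<in> setB2))"
proof -
  interpret prescribed_spectra \<alpha>1 \<alpha>2 \<beta>2 \<beta>3 \<beta>4 a b n
    using dist bpos by unfold_locales auto
  show ?thesis
    unfolding \<Lambda>_def params_iff[symmetric]
    using spectrum_conditions_iff_params[OF sum_ne n] params_imp_setB[OF sum_ne _ bpos] by blast
qed

end
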